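(* Let $\delta>0$ and positive integers $d',p$. Define $\mathcal N^{RS}_\delta:\mathbb{R}^{d'}\times\mathbb{R}^p\to\mathbb{R}^p$ by $y_k=1+\sum_{j\in[d']}\mathcal N^C_\delta(x_k,x_j)$ for $k\in[d']$ and $\mathcal N^{RS}_\delta(\mathbf{x},\mathbf{r})[i]=\sum_{k\in[d']}\mathcal N^{IFP}(x_k,r_i-y_k)$ for $i\in[p]$. If $\mathbf{x}\in[0,1]^{d'}$ is such that for all $j\ne k$ either $|x_j-x_k|\ge\delta$ or $x_j=x_k=0$, and $\mathbf{r}\in\{1,\dots,d'\}^p$, then the output $\mathbf{x}'=\mathcal N^{RS}_\delta(\mathbf{x},\mathbf{r})$ satisfies $x'_i=\mathcal R_{r_i}(\mathbf{x})$ for all $i\in[p]$. Further, for arbitrary $\mathbf{x}\in\mathbb{R}^{d'}$, $|x'_i|\le d'\|\mathbf{x}\|_\infty$. Moreover, $\mathcal N^{RS}_\delta$ is a ReLU network with 2 hidden layers, width at most $\max(2{d'}^2+2d'+2p,\,4pd')$, and magnitudes of weights bounded by $\frac1\delta$.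
   Context: $\mathcal N^C_\delta(x_1,x_2)=\left[\frac1\delta(x_1-x_2)\right]_+-\left[\frac1\delta(x_1-x_2-\delta)\right]_+$ (comparison network) and $\mathcal N^{IFP}(x,s)=[x+s]_+-[x+s-1]_+-[s]_++[s-1]_+$ (indicator function product network), where $[z]_+=\max\{0,z\}$. $\mathcal R_r(\mathbf{x})$ is the $r$-th entry of $\mathbf{x}$ in ascending sorted order. Width is the number of neurons in the largest hidden layer.
   Formalization: All weights of the network, biases included, are bounded in magnitude by max(1, 1/delta) rather than by 1/delta. The statement above fails without it. *)

theory Defs
  imports "HOL-Analysis.Analysis"
begin

text \<open>Vectors in R^n are represented as functions nat => real, only indices 0..n-1 matter
  (paper index k in [n] corresponds to k-1 here).\<close>

definition relu :: "real \<Rightarrow> real" where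
  "relu z = max 0 z"

definition NC :: "real \<Rightarrow> real \<Rightarrow> real \<Rightarrow> real" where
  "NC \<delta> x1 x2 = relu ((1/\<delta>) * (x1 - x2)) - relu ((1/\<delta>) * (x1 - x2 - \<delta>))"

definition NIFP :: "real \<Rightarrow> real \<Rightarrow> real" where
  "NIFP x s = relu (x + s) - relu (x + s - 1) - relu s + relu (s - 1)"

definition RS_y :: "real \<Rightarrow> nat \<Rightarrow> (nat \<Rightarrow> real) \<Rightarrow> nat \<Rightarrow> real" where
  "RS_y \<delta> d x k = 1 + (\<Sum>j<d. NC \<delta> (x k) (x j))"

definition NRS :: "real \<Rightarrow> nat \<Rightarrow> (nat \<Rightarrow> real) \<Rightarrow> (nat \<Rightarrow> real) \<Rightarrow> nat \<Rightarrow> real" where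
  "NRS \<delta> d x r i = (\<Sum>k<d. NIFP (x k) (r i - RS_y \<delta> d x k))"

text \<open>R_r(x): the r-th entry (1-based) of x_1..x_d in ascending sorted order\<close>
definition rank_entry :: "nat \<Rightarrow> (nat \<Rightarrow> real) \<Rightarrow> nat \<Rightarrow> real" where
  "rank_entry d x r = sort (map x [0..<d]) ! (r - 1)"

definition sup_norm :: "nat \<Rightarrow> (nat \<Rightarrow> real) \<Rightarrow> real" where
  "sup_norm d x = Max ((\<lambda>k. \<bar>x k\<bar>) ` {..<d})"

text \<open>A network is given by its list of layer widths
  [n_0, n_1, ..., n_L] and a list of L affine layers (weight matrix, bias vector).
  ReLU is applied after every layer except the last; hidden layers are n_1..n_(L-1).\<close>

type_synonym layer = "(nat \<Rightarrow> nat \<Rightarrow> real) \<times> (nat \<Rightarrow> real)"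

definition affine :: "nat \<Rightarrow> layer \<Rightarrow> (nat \<Rightarrow> real) \<Rightarrow> (nat \<Rightarrow> real)" where
  "affine n L v = (\<lambda>i. (\<Sum>j<n. fst L i j * v j) + snd L i)"

fun nn_eval :: "nat list \<Rightarrow> layer list \<Rightarrow> (nat \<Rightarrow> real) \<Rightarrow> (nat \<Rightarrow> real)" where
  "nn_eval (n # m # ns) [L] v = affine n L v"
| "nn_eval (n # m # ns) (L # L' # Ls) v = nn_eval (m # ns) (L' # Ls) (\<lambda>i. relu (affine n L v i))"
| "nn_eval _ _ v = v"

definition nn_wf :: "nat list \<Rightarrow> layer list \<Rightarrow> bool" where
  "nn_wf dims Ls \<longleftrightarrow> Ls \<noteq> [] \<and> length dims = length Ls + 1"

definition nn_hidden_layers :: "layer list \<Rightarrow> nat" where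
  "nn_hidden_layers Ls = length Ls - 1"

definition nn_width :: "nat list \<Rightarrow> nat" where
  "nn_width dims = Max (set (butlast (tl dims)))"

definition nn_weight_bound :: "nat list \<Rightarrow> layer list \<Rightarrow> real \<Rightarrow> bool" where
  "nn_weight_bound dims Ls B \<longleftrightarrow>
     (\<forall>l<length Ls. \<forall>i<dims ! (Suc l).
        \<bar>snd (Ls ! l) i\<bar> \<le> B \<and> (\<forall>j<dims ! l. \<bar>fst (Ls ! l) i j\<bar> \<le> B))"

definition join_input :: "nat \<Rightarrow> (nat \<Rightarrow> real) \<Rightarrow> (nat \<Rightarrow> real) \<Rightarrow> (nat \<Rightarrow> real)" where
  "join_input d x r = (\<lambda>j. if j < d then x j else r (j - d))"

end

theory Submission
  imports Defs "HOL-Library.Multiset"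
begin

(* Under the separation hypothesis every comparison N^C(x_k, x_j) is exactly the indicator of
   x_j < x_k, so y_k = 1 + #{j. x_j < x_k} is an integer; and for an integer s and x in [0,1]
   the gadget N^IFP(x, s) is x if s = 0 and 0 otherwise. Hence output i adds up the entries
   x_k having exactly r_i - 1 entries strictly below them. Nonzero entries are pairwise
   distinct, so this is the r_i-th smallest entry itself when it is nonzero, and a sum of
   zeros otherwise. The bound comes from |N^IFP(x, s)| <= |x|. The network evaluates the
   formula directly: the first hidden layer holds the ReLUs of N^C and the positive and
   negative parts of x and r, the second the four ReLUs of each N^IFP(x_k, r_i - y_k), and
   the output layer adds them up with signs. *)

lemma NC_eq_indicator:
  assumes "\<delta> > 0" and "\<bar>a - b\<bar> \<ge> \<delta> \<or> a = b"
  shows "NC \<delta> a b = (if b < a then 1 else 0)"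
  using assms unfolding NC_def relu_def
  by (auto simp: field_simps max_def mult_le_0_iff abs_if)

lemma NIFP_of_int:
  assumes "0 \<le> x" and "x \<le> 1"
  shows "NIFP x (of_int n) = (if n = 0 then x else 0)"
proof -
  consider "n = 0" | "of_int n \<ge> (1::real)" | "of_int n \<le> (-1::real)"
    by (cases "n = 0") (use int_one_le_iff_zero_less in \<open>force+\<close>)
  then show ?thesis
    using assms unfolding NIFP_def relu_def by cases auto
qed

lemma abs_NIFP_le: "\<bar>NIFP x s\<bar> \<le> \<bar>x\<bar>"
  unfolding NIFP_def relu_def by (auto simp: max_def abs_if)

lemma card_filter_sort:
  fixes x :: "nat \<Rightarrow> 'a::linorder"
  shows "card {t. t < d \<and> P (sort (map x [0..<d]) ! t)} = card {j. j < d \<and> P (x j)}"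
proof -
  have "length (filter P (sort (map x [0..<d]))) = length (filter P (map x [0..<d]))"
    by (metis mset_filter mset_sort size_mset)
  then show ?thesis
    by (simp add: length_filter_conv_card) (auto intro!: arg_cong[where f = card])
qed

lemma sort_nth_card_bounds:
  fixes x :: "nat \<Rightarrow> 'a::linorder"
  assumes "m < d"
  defines "w \<equiv> sort (map x [0..<d]) ! m"
  shows "card {j. j < d \<and> x j < w} \<le> m" and "m < card {j. j < d \<and> x j \<le> w}"
proof -
  let ?S = "sort (map x [0..<d])"
  have sorted: "sorted ?S" and len: "length ?S = d" by simp_all
  have "{t. t < d \<and> ?S ! t < w} \<subseteq> {..<m}"
    using sorted_nth_mono[OF sorted, of m] len unfolding w_def by (auto simp: not_less[symmetric])
  then have "card {t. t < d \<and> ?S ! t < w} \<le> m"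
    by (metis card_lessThan card_mono finite_lessThan)
  then show "card {j. j < d \<and> x j < w} \<le> m"
    using card_filter_sort[where P = "\<lambda>v. v < w"] by simp
  have "{..m} \<subseteq> {t. t < d \<and> ?S ! t \<le> w}"
    using sorted_nth_mono[OF sorted, of _ m] len assms(1) unfolding w_def by auto
  then have "card {..m} \<le> card {t. t < d \<and> ?S ! t \<le> w}"
    by (intro card_mono) auto
  then have "m < card {t. t < d \<and> ?S ! t \<le> w}"
    by simp
  then show "m < card {j. j < d \<and> x j \<le> w}"
    using card_filter_sort[where P = "\<lambda>v. v \<le> w"] by simp
qed

lemma sum_rank_eq_sort_nth:
  fixes x :: "nat \<Rightarrow> real"
  assumes "m < d"
    and nonzero_distinct: "\<forall>j<d. \<forall>k<d. j \<noteq> k \<longrightarrow> x j = x k \<longrightarrow> x j = 0"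
  shows "(\<Sum>k<d. if card {j. j < d \<and> x j < x k} = m then x k else 0) = sort (map x [0..<d]) ! m"
    (is "(\<Sum>k<d. if ?c k = m then x k else 0) = ?w")
proof -
  have less: "card {j. j < d \<and> x j < ?w} \<le> m" and le: "m < card {j. j < d \<and> x j \<le> ?w}"
    using sort_nth_card_bounds[OF assms(1)] by blast+
  have rank_m: "x k = ?w" if "k < d" "?c k = m" for k
  proof (rule linorder_cases[of "x k" ?w])
    assume "x k < ?w"
    then have "insert k {j. j < d \<and> x j < x k} \<subseteq> {j. j < d \<and> x j < ?w}"
      using that by auto
    from card_mono[OF _ this] show ?thesis
      using less that by simp
  next
    assume "x k > ?w"
    then have "{j. j < d \<and> x j \<le> ?w} \<subseteq> {j. j < d \<and> x j < x k}"
      by auto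
    from card_mono[OF _ this] show ?thesis
      using le that by simp
  qed
  have "(\<Sum>k<d. if ?c k = m then x k else 0) = (\<Sum>k<d. if ?c k = m then ?w else 0)"
  proof (rule sum.cong)
    fix k assume "k \<in> {..<d}"
    then show "(if ?c k = m then x k else 0) = (if ?c k = m then ?w else 0)"
      using rank_m[of k] by simp
  qed simp
  also have "\<dots> = ?w"
  proof (cases "?w = 0")
    case False
    have "?w \<in> set (sort (map x [0..<d]))"
      using assms(1) by (intro nth_mem) simp
    then obtain k0 where k0: "k0 < d" "x k0 = ?w"
      by auto
    have unique: "j = k0" if "j < d" "x j = ?w" for j
      using nonzero_distinct that k0 False by (metis (no_types, lifting))
    have "{j. j < d \<and> x j \<le> ?w} = insert k0 {j. j < d \<and> x j < ?w}"
      using k0 by (auto simp: le_less dest: unique)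
    then have "?c k0 = m"
      using less le k0 by simp
    then have "?c k = m \<longleftrightarrow> k = k0" if "k < d" for k
      using rank_m[OF that] unique[OF that] by blast
    then have "(\<Sum>k<d. if ?c k = m then ?w else 0) = (\<Sum>k<d. if k = k0 then ?w else 0)"
      by (intro sum.cong) auto
    then show ?thesis
      using k0 by simp
  qed (simp only: if_cancel sum.neutral_const)
  finally show ?thesis .
qed

lemma RS_y_eq_card_less:
  assumes "\<delta> > 0"
    and sep: "\<forall>j<d. \<bar>x k - x j\<bar> \<ge> \<delta> \<or> x k = x j"
  shows "RS_y \<delta> d x k = 1 + card {j. j < d \<and> x j < x k}"
proof -
  have "(\<Sum>j<d. NC \<delta> (x k) (x j)) = (\<Sum>j<d. if x j < x k then 1 else 0)"
    using NC_eq_indicator[OF assms(1)] sep by (intro sum.cong) auto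
  also have "\<dots> = card {j. j < d \<and> x j < x k}"
    by (simp add: sum.If_cases Int_def conj_commute)
  finally show ?thesis
    unfolding RS_y_def by simp
qed

lemma NRS_eq_sum_rank:
  assumes "\<delta> > 0"
    and range: "\<forall>k<d. 0 \<le> x k \<and> x k \<le> 1"
    and sep: "\<forall>j<d. \<forall>k<d. \<bar>x k - x j\<bar> \<ge> \<delta> \<or> x k = x j"
    and "\<rho> i \<ge> 1"
  shows "NRS \<delta> d x (\<lambda>i. real (\<rho> i)) i
    = (\<Sum>k<d. if card {j. j < d \<and> x j < x k} = \<rho> i - 1 then x k else 0)"
  unfolding NRS_def
proof (rule sum.cong)
  fix k assume k: "k \<in> {..<d}"
  let ?c = "card {j. j < d \<and> x j < x k}"
  have shift: "real (\<rho> i) - RS_y \<delta> d x k = of_int (int (\<rho> i) - 1 - int ?c)"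
    using RS_y_eq_card_less[OF assms(1)] sep k by simp
  have xk: "0 \<le> x k" "x k \<le> 1"
    using range k by auto
  have "int (\<rho> i) - 1 - int ?c = 0 \<longleftrightarrow> ?c = \<rho> i - 1"
    using \<open>\<rho> i \<ge> 1\<close> by auto
  then show "NIFP (x k) (real (\<rho> i) - RS_y \<delta> d x k) = (if ?c = \<rho> i - 1 then x k else 0)"
    unfolding shift NIFP_of_int[OF xk] by presburger
qed simp

lemma NRS_eq_rank_entry:
  assumes "\<delta> > 0"
    and range: "\<forall>k<d. 0 \<le> x k \<and> x k \<le> 1"
    and sep: "\<forall>j<d. \<forall>k<d. j \<noteq> k \<longrightarrow> \<bar>x j - x k\<bar> \<ge> \<delta> \<or> (x j = 0 \<and> x k = 0)"
    and "1 \<le> \<rho> i" and "\<rho> i \<le> d"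
  shows "NRS \<delta> d x (\<lambda>i. real (\<rho> i)) i = rank_entry d x (\<rho> i)"
proof -
  have "\<forall>j<d. \<forall>k<d. \<bar>x k - x j\<bar> \<ge> \<delta> \<or> x k = x j"
    using sep by (metis abs_minus_commute)
  moreover have "\<forall>j<d. \<forall>k<d. j \<noteq> k \<longrightarrow> x j = x k \<longrightarrow> x j = 0"
    using sep \<open>\<delta> > 0\<close> by force
  ultimately show ?thesis
    using NRS_eq_sum_rank[OF assms(1,2)] sum_rank_eq_sort_nth[of "\<rho> i - 1" d x] assms(4,5)
    unfolding rank_entry_def by simp
qed

lemma abs_NRS_le:
  assumes "d > 0"
  shows "\<bar>NRS \<delta> d x r i\<bar> \<le> real d * sup_norm d x"
proof -
  have "\<bar>NRS \<delta> d x r i\<bar> \<le> (\<Sum>k<d. \<bar>NIFP (x k) (r i - RS_y \<delta> d x k)\<bar>)"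
    unfolding NRS_def by (rule sum_abs)
  also have "\<dots> \<le> (\<Sum>k<d. sup_norm d x)"
  proof (rule sum_mono)
    fix k assume "k \<in> {..<d}"
    then have "\<bar>x k\<bar> \<le> sup_norm d x"
      unfolding sup_norm_def using assms by (intro Max_ge) auto
    then show "\<bar>NIFP (x k) (r i - RS_y \<delta> d x k)\<bar> \<le> sup_norm d x"
      using abs_NIFP_le order_trans by blast
  qed
  finally show ?thesis
    by simp
qed

lemma relu_sub_relu_neg: "relu z - relu (- z) = z"
  unfolding relu_def by auto

lemma sum_lessThan_add:
  fixes n :: nat
  shows "(\<Sum>j<m + n. f j) = (\<Sum>j<m. f j) + (\<Sum>j<n. f (m + j))"
  by (induction n) (simp_all add: add_ac)

lemma sum_lessThan_mult:
  fixes m :: nat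
  shows "(\<Sum>j<m * n. f j) = (\<Sum>u<m. \<Sum>v<n. f (u * n + v))"
proof (induction m)
  case (Suc m)
  have "(\<Sum>j<Suc m * n. f j) = (\<Sum>j<m * n + n. f j)"
    by (simp add: add.commute)
  also have "\<dots> = (\<Sum>j<m * n. f j) + (\<Sum>v<n. f (m * n + v))"
    by (rule sum_lessThan_add)
  finally show ?case
    using Suc by simp
qed simp

lemma div_mod_mult_add:
  fixes u v b :: nat
  assumes "v < b"
  shows "(u * b + v) div b = u" and "(u * b + v) mod b = v"
  using assms by simp_all

lemma mult_add_less_square:
  fixes u v d :: nat
  assumes "u < d" and "v < d"
  shows "u * d + v < d * d"
proof -
  have "Suc u * d \<le> d * d"
    using assms(1) by (intro mult_right_mono) simp_all
  then show ?thesis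
    using assms(2) by simp
qed

lemma sum_delta_mult:
  "finite A \<Longrightarrow> (\<Sum>j\<in>A. (if j = a then c else 0) * f j) = (if a \<in> A then c * f a else (0::real))"
  by (simp add: if_distrib[of "\<lambda>z. z * _"] cong: if_cong)

definition RS_width1 :: "nat \<Rightarrow> nat \<Rightarrow> nat" where
  "RS_width1 d p = d*d + d*d + d + d + p + p"

(* Layout of the first hidden layer: neuron u*d + w computes relu ((x u - x w)/\<delta>), neuron
   d*d + (u*d + w) computes relu ((x u - x w)/\<delta> - 1), and the remaining four blocks hold
   relu (x k), relu (- x k), relu (r i), relu (- r i), from which x and r are recovered as
   relu z - relu (- z). *)
definition RS_W1 :: "real \<Rightarrow> nat \<Rightarrow> nat \<Rightarrow> nat \<Rightarrow> nat \<Rightarrow> real" where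
  "RS_W1 \<delta> d p n j =
    (if n < d*d then
       (if j = n div d then 1/\<delta> else 0) + (if j = n mod d then -1/\<delta> else 0)
     else if n < d*d + d*d then
       (if j = (n - d*d) div d then 1/\<delta> else 0) + (if j = (n - d*d) mod d then -1/\<delta> else 0)
     else if n < d*d + d*d + d then (if j = n - (d*d + d*d) then 1 else 0)
     else if n < d*d + d*d + d + d then (if j = n - (d*d + d*d + d) then -1 else 0)
     else if n < d*d + d*d + d + d + p then (if j = d + (n - (d*d + d*d + d + d)) then 1 else 0)
     else (if j = d + (n - (d*d + d*d + d + d + p)) then -1 else 0))"

(* A diagonal neuron u = w would always output relu 0 = 0; bias 1 turns it into the constant 1
   of y_k, which keeps every bias of magnitude at most 1. *)
definition RS_b1 :: "nat \<Rightarrow> nat \<Rightarrow> real" where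
  "RS_b1 d n =
    (if n < d*d \<and> n div d = n mod d then 1 else if d*d \<le> n \<and> n < d*d + d*d then -1 else 0)"

definition RS_hidden1 :: "real \<Rightarrow> nat \<Rightarrow> nat \<Rightarrow> (nat \<Rightarrow> real) \<Rightarrow> nat \<Rightarrow> real" where
  "RS_hidden1 \<delta> d p v n = relu (affine (d + p) (RS_W1 \<delta> d p, RS_b1 d) v n)"

lemma affine_RS_W1:
  "affine (d + p) (RS_W1 \<delta> d p, RS_b1 d) (join_input d x r) n
    = (\<Sum>j<d. RS_W1 \<delta> d p n j * x j) + (\<Sum>j<p. RS_W1 \<delta> d p n (d + j) * r j) + RS_b1 d n"
  unfolding affine_def sum_lessThan_add join_input_def by simp

lemma RS_hidden1_cmp:
  assumes "u < d" and "w < d"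
  shows "RS_hidden1 \<delta> d p (join_input d x r) (u*d + w)
    = relu ((1/\<delta>) * (x u - x w)) + (if u = w then 1 else 0)"
  using mult_add_less_square[OF assms] assms
  by (simp add: RS_hidden1_def affine_RS_W1 RS_W1_def RS_b1_def div_mod_mult_add distrib_right
      sum.distrib sum_delta_mult right_diff_distrib relu_def)

lemma RS_hidden1_cmp_shift:
  assumes "\<delta> > 0" and "u < d" and "w < d"
  shows "RS_hidden1 \<delta> d p (join_input d x r) (d*d + (u*d + w))
    = relu ((1/\<delta>) * (x u - x w - \<delta>))"
proof -
  have pre: "affine (d + p) (RS_W1 \<delta> d p, RS_b1 d) (join_input d x r) (d*d + (u*d + w))
      = (1/\<delta>) * (x u - x w) - 1"
    using mult_add_less_square[OF assms(2,3)] assms(2,3)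
    by (simp add: affine_RS_W1 RS_W1_def RS_b1_def div_mod_mult_add distrib_right
        sum.distrib sum_delta_mult right_diff_distrib)
  show ?thesis
    unfolding RS_hidden1_def pre using assms(1) by (simp add: field_simps)
qed

lemma RS_hidden1_x:
  assumes "k < d"
  shows "RS_hidden1 \<delta> d p (join_input d x r) (d*d + d*d + k) = relu (x k)"
    and "RS_hidden1 \<delta> d p (join_input d x r) (d*d + d*d + d + k) = relu (- x k)"
  using assms by (simp_all add: RS_hidden1_def affine_RS_W1 RS_W1_def RS_b1_def sum_delta_mult)

lemma RS_hidden1_r:
  assumes "i < p"
  shows "RS_hidden1 \<delta> d p (join_input d x r) (d*d + d*d + d + d + i) = relu (r i)"
    and "RS_hidden1 \<delta> d p (join_input d x r) (d*d + d*d + d + d + p + i) = relu (- r i)"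
  using assms by (simp_all add: RS_hidden1_def affine_RS_W1 RS_W1_def RS_b1_def sum_delta_mult)

(* Neuron (i*d + k)*4 + q of the second hidden layer computes the q-th ReLU argument of
   N^IFP (x k) s with s = r i - y_k, namely x k + s, x k + s - 1, s, s - 1. *)
definition RS_W2 :: "nat \<Rightarrow> nat \<Rightarrow> nat \<Rightarrow> nat \<Rightarrow> real" where
  "RS_W2 d p n j =
    (let q = n mod 4; i = n div 4 div d; k = n div 4 mod d in
     if j < d*d then (if j div d = k then -1 else 0)
     else if j < d*d + d*d then (if (j - d*d) div d = k then 1 else 0)
     else if j < d*d + d*d + d then (if j - (d*d + d*d) = k \<and> q < 2 then 1 else 0)
     else if j < d*d + d*d + d + d then (if j - (d*d + d*d + d) = k \<and> q < 2 then -1 else 0)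
     else if j < d*d + d*d + d + d + p then (if j - (d*d + d*d + d + d) = i then 1 else 0)
     else (if j - (d*d + d*d + d + d + p) = i then -1 else 0))"

definition RS_b2 :: "nat \<Rightarrow> real" where
  "RS_b2 n = (if odd n then -1 else 0)"

lemma affine_RS_W2:
  assumes "n div 4 div d = i" and "n div 4 mod d = k" and "i < p" and "k < d"
  shows "affine (RS_width1 d p) (RS_W2 d p, RS_b2) h n =
     - (\<Sum>v<d. h (k*d + v)) + (\<Sum>v<d. h (d*d + (k*d + v)))
     + (if n mod 4 < 2 then h (d*d + d*d + k) - h (d*d + d*d + d + k) else 0)
     + h (d*d + d*d + d + d + i) - h (d*d + d*d + d + d + p + i) - (if odd n then 1 else 0)"
proof -
  have cmp: "(\<Sum>v<d. RS_W2 d p n (u*d + v) * h (u*d + v))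
      = (if u = k then - (\<Sum>v<d. h (k*d + v)) else 0)"
    and cmp_shift: "(\<Sum>v<d. RS_W2 d p n (d*d + (u*d + v)) * h (d*d + (u*d + v)))
      = (if u = k then (\<Sum>v<d. h (d*d + (k*d + v))) else 0)"
    if "u < d" for u
    using mult_add_less_square[OF that] that assms(2)
    by (simp_all add: RS_W2_def div_mod_mult_add sum_negf)
  have x: "RS_W2 d p n (d*d + d*d + j) = (if j = k \<and> n mod 4 < 2 then 1 else 0)"
    and x_neg: "RS_W2 d p n (d*d + d*d + d + j) = (if j = k \<and> n mod 4 < 2 then -1 else 0)"
    if "j < d" for j
    using that assms(2) by (simp_all add: RS_W2_def)
  have r: "RS_W2 d p n (d*d + d*d + d + d + j) = (if j = i then 1 else 0)"
    and r_neg: "RS_W2 d p n (d*d + d*d + d + d + p + j) = (if j = i then -1 else 0)"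
    if "j < p" for j
    using that assms(1) by (simp_all add: RS_W2_def)
  show ?thesis
    unfolding affine_def RS_width1_def sum_lessThan_add sum_lessThan_mult
    using assms by (simp add: cmp cmp_shift x x_neg r r_neg RS_b2_def if_distrib[of "\<lambda>z. z * _"]
        cong: if_cong)
qed

lemma RS_preactivation2:
  assumes "\<delta> > 0" and "i < p" and "k < d" and "q < 4"
  shows "affine (RS_width1 d p) (RS_W2 d p, RS_b2) (RS_hidden1 \<delta> d p (join_input d x r)) ((i*d + k)*4 + q)
    = (if q < 2 then x k else 0) + (r i - RS_y \<delta> d x k) - (if odd q then 1 else 0)"
proof -
  let ?n = "(i*d + k)*4 + q"
  let ?h = "RS_hidden1 \<delta> d p (join_input d x r)"
  have div4: "?n div 4 = i*d + k" and mod4: "?n mod 4 = q"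
    using div_mod_mult_add[OF assms(4)] by blast+
  have "?n div 4 div d = i" "?n div 4 mod d = k"
    unfolding div4 using div_mod_mult_add[OF assms(3)] by blast+
  note layer2 = affine_RS_W2[OF this assms(2,3), of ?h]
  have "odd ?n \<longleftrightarrow> odd q"
    by simp
  moreover have "(\<Sum>v<d. ?h (k*d + v)) = (\<Sum>v<d. relu ((1/\<delta>) * (x k - x v))) + 1"
    using assms(3) by (simp add: RS_hidden1_cmp sum.distrib)
  moreover have "(\<Sum>v<d. ?h (d*d + (k*d + v))) = (\<Sum>v<d. relu ((1/\<delta>) * (x k - x v - \<delta>)))"
    using assms(1,3) by (simp add: RS_hidden1_cmp_shift)
  moreover have "RS_y \<delta> d x k
      = 1 + (\<Sum>v<d. relu ((1/\<delta>) * (x k - x v))) - (\<Sum>v<d. relu ((1/\<delta>) * (x k - x v - \<delta>)))"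
    unfolding RS_y_def NC_def by (simp add: sum_subtractf)
  ultimately show ?thesis
    unfolding layer2 mod4 using assms(2,3)
    by (simp add: RS_hidden1_x RS_hidden1_r relu_sub_relu_neg)
qed

definition RS_W3 :: "nat \<Rightarrow> nat \<Rightarrow> nat \<Rightarrow> real" where
  "RS_W3 d i n = (if n div 4 div d = i then (if n mod 4 = 0 \<or> n mod 4 = 3 then 1 else -1) else 0)"

lemma affine_RS_W3:
  assumes "i < p"
  shows "affine (p*d*4) (RS_W3 d, \<lambda>_. 0) h i
    = (\<Sum>k<d. h ((i*d + k)*4) - h ((i*d + k)*4 + 1) - h ((i*d + k)*4 + 2) + h ((i*d + k)*4 + 3))"
    (is "_ = (\<Sum>k<d. ?g k)")
proof -
  have block: "(\<Sum>q<4. RS_W3 d i ((a*d + k)*4 + q) * h ((a*d + k)*4 + q)) = (if a = i then ?g k else 0)"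
    if "k < d" for a k
  proof -
    have "RS_W3 d i ((a*d + k)*4 + q) = (if a = i then (if q = 0 \<or> q = 3 then 1 else -1) else 0)"
      if "q < 4" for q
      using that \<open>k < d\<close> unfolding RS_W3_def by (simp only: div_mod_mult_add)
    then have "(\<Sum>q<4. RS_W3 d i ((a*d + k)*4 + q) * h ((a*d + k)*4 + q))
        = (\<Sum>q<4. (if a = i then (if q = 0 \<or> q = 3 then 1 else -1) else 0) * h ((a*d + k)*4 + q))"
      by (intro sum.cong) simp_all
    then show ?thesis
      by (cases "a = i") (simp_all add: eval_nat_numeral)
  qed
  have "affine (p*d*4) (RS_W3 d, \<lambda>_. 0) h i
      = (\<Sum>a<p. \<Sum>k<d. \<Sum>q<4. RS_W3 d i ((a*d + k)*4 + q) * h ((a*d + k)*4 + q))"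
    by (simp only: affine_def sum_lessThan_mult fst_conv snd_conv add_0_right)
  also have "\<dots> = (\<Sum>a<p. \<Sum>k<d. if a = i then ?g k else 0)"
    by (intro sum.cong refl) (rule block, simp)
  also have "\<dots> = (\<Sum>a<p. if a = i then (\<Sum>k<d. ?g k) else 0)"
    by (intro sum.cong refl) simp
  finally show ?thesis
    using assms by simp
qed

definition RS_dims :: "nat \<Rightarrow> nat \<Rightarrow> nat list" where
  "RS_dims d p = [d + p, RS_width1 d p, p*d*4, p]"

definition RS_layers :: "real \<Rightarrow> nat \<Rightarrow> nat \<Rightarrow> layer list" where
  "RS_layers \<delta> d p = [(RS_W1 \<delta> d p, RS_b1 d), (RS_W2 d p, RS_b2), (RS_W3 d, \<lambda>_. 0)]"

lemma nn_eval_RS: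
  assumes "\<delta> > 0" and "i < p"
  shows "nn_eval (RS_dims d p) (RS_layers \<delta> d p) (join_input d x r) i = NRS \<delta> d x r i"
proof -
  let ?pre2 = "affine (RS_width1 d p) (RS_W2 d p, RS_b2) (RS_hidden1 \<delta> d p (join_input d x r))"
  have "nn_eval (RS_dims d p) (RS_layers \<delta> d p) (join_input d x r) i
      = affine (p*d*4) (RS_W3 d, \<lambda>_. 0) (\<lambda>n. relu (?pre2 n)) i"
    by (simp add: RS_dims_def RS_layers_def RS_hidden1_def[abs_def])
  also have "\<dots> = (\<Sum>k<d. NIFP (x k) (r i - RS_y \<delta> d x k))"
    unfolding affine_RS_W3[OF assms(2)]
  proof (rule sum.cong)
    fix k assume "k \<in> {..<d}"
    then have pre2: "?pre2 ((i*d + k)*4 + q)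
        = (if q < 2 then x k else 0) + (r i - RS_y \<delta> d x k) - (if odd q then 1 else 0)"
      if "q < 4" for q
      using RS_preactivation2[OF assms] that by simp
    have "?pre2 ((i*d + k)*4) = x k + (r i - RS_y \<delta> d x k)"
      and "?pre2 ((i*d + k)*4 + 1) = x k + (r i - RS_y \<delta> d x k) - 1"
      and "?pre2 ((i*d + k)*4 + 2) = r i - RS_y \<delta> d x k"
      and "?pre2 ((i*d + k)*4 + 3) = r i - RS_y \<delta> d x k - 1"
      using pre2[of 0] pre2[of 1] pre2[of 2] pre2[of 3] by simp_all
    then show "relu (?pre2 ((i*d + k)*4)) - relu (?pre2 ((i*d + k)*4 + 1))
        - relu (?pre2 ((i*d + k)*4 + 2)) + relu (?pre2 ((i*d + k)*4 + 3))
        = NIFP (x k) (r i - RS_y \<delta> d x k)"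
      unfolding NIFP_def by simp
  qed simp
  finally show ?thesis
    unfolding NRS_def .
qed

lemma abs_if_le: "\<bar>a\<bar> \<le> B \<Longrightarrow> \<bar>b\<bar> \<le> B \<Longrightarrow> \<bar>if P then a else b\<bar> \<le> (B::real)"
  by simp

lemma abs_RS_W1_le:
  assumes "\<delta> > 0"
  shows "\<bar>RS_W1 \<delta> d p n j\<bar> \<le> max 1 (1/\<delta>)"
proof -
  have pair: "\<bar>(if j = a then 1/\<delta> else 0) + (if j = b then -1/\<delta> else 0)\<bar> \<le> max 1 (1/\<delta>)" for a b
    using assms by (cases "j = a"; cases "j = b") (simp_all add: le_max_iff_disj)
  show ?thesis
    unfolding RS_W1_def by (intro abs_if_le pair) simp_all
qed

lemma nn_weight_bound_RS:
  assumes "\<delta> > 0"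
  shows "nn_weight_bound (RS_dims d p) (RS_layers \<delta> d p) (max 1 (1/\<delta>))"
proof -
  have "\<bar>RS_W2 d p n j\<bar> \<le> max 1 (1/\<delta>)" "\<bar>RS_W3 d n j\<bar> \<le> max 1 (1/\<delta>)"
    "\<bar>RS_b1 d n\<bar> \<le> max 1 (1/\<delta>)" "\<bar>RS_b2 n\<bar> \<le> max 1 (1/\<delta>)" for n j
    unfolding RS_W2_def RS_W3_def RS_b1_def RS_b2_def Let_def by (intro abs_if_le; simp)+
  then show ?thesis
    using abs_RS_W1_le[OF assms]
    unfolding nn_weight_bound_def RS_layers_def by (auto simp: less_Suc_eq nth_Cons')
qed

lemma NRS_relu_network:
  assumes "\<delta> > 0"
  shows "\<exists>dims Ls. nn_wf dims Ls \<and> hd dims = d + p \<and> last dims = p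
        \<and> nn_hidden_layers Ls = 2
        \<and> nn_width dims \<le> max (2 * d^2 + 2 * d + 2 * p) (4 * p * d)
        \<and> nn_weight_bound dims Ls (max 1 (1 / \<delta>))
        \<and> (\<forall>(x :: nat \<Rightarrow> real) (r :: nat \<Rightarrow> real). \<forall>i<p.
              nn_eval dims Ls (join_input d x r) i = NRS \<delta> d x r i)"
proof -
  have "nn_width (RS_dims d p) \<le> max (2 * d^2 + 2 * d + 2 * p) (4 * p * d)"
    by (simp add: nn_width_def RS_dims_def RS_width1_def power2_eq_square ac_simps)
  then show ?thesis
    using nn_weight_bound_RS[OF assms] nn_eval_RS[OF assms]
    by (intro exI[of _ "RS_dims d p"] exI[of _ "RS_layers \<delta> d p"])
      (simp add: RS_dims_def RS_layers_def nn_wf_def nn_hidden_layers_def)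
qed

theorem lemmaG13:
  fixes \<delta> :: real and d p :: nat
  assumes "\<delta> > 0" and "d > 0" and "p > 0"
  shows
    "(\<forall>(x :: nat \<Rightarrow> real) (\<rho> :: nat \<Rightarrow> nat).
        (\<forall>k<d. 0 \<le> x k \<and> x k \<le> 1)
      \<and> (\<forall>j<d. \<forall>k<d. j \<noteq> k \<longrightarrow> \<bar>x j - x k\<bar> \<ge> \<delta> \<or> (x j = 0 \<and> x k = 0))
      \<and> (\<forall>i<p. 1 \<le> \<rho> i \<and> \<rho> i \<le> d)
      \<longrightarrow> (\<forall>i<p. NRS \<delta> d x (\<lambda>i. real (\<rho> i)) i = rank_entry d x (\<rho> i)))
   \<and> (\<forall>(x :: nat \<Rightarrow> real) (r :: nat \<Rightarrow> real). \<forall>i<p.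
        \<bar>NRS \<delta> d x r i\<bar> \<le> real d * sup_norm d x)
   \<and> (\<exists>dims Ls. nn_wf dims Ls \<and> hd dims = d + p \<and> last dims = p
        \<and> nn_hidden_layers Ls = 2
        \<and> nn_width dims \<le> max (2 * d^2 + 2 * d + 2 * p) (4 * p * d)
        \<and> nn_weight_bound dims Ls (max 1 (1 / \<delta>))
        \<and> (\<forall>(x :: nat \<Rightarrow> real) (r :: nat \<Rightarrow> real). \<forall>i<p.
              nn_eval dims Ls (join_input d x r) i = NRS \<delta> d x r i))"
proof (intro conjI allI impI)
  fix x :: "nat \<Rightarrow> real" and \<rho> :: "nat \<Rightarrow> nat" and i
  assume "(\<forall>k<d. 0 \<le> x k \<and> x k \<le> 1)
      \<and> (\<forall>j<d. \<forall>k<d. j \<noteq> k \<longrightarrow> \<bar>x j - x k\<bar> \<ge> \<delta> \<or> (x j = 0 \<and> x k = 0))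
      \<and> (\<forall>i<p. 1 \<le> \<rho> i \<and> \<rho> i \<le> d)" and "i < p"
  then show "NRS \<delta> d x (\<lambda>i. real (\<rho> i)) i = rank_entry d x (\<rho> i)"
    using NRS_eq_rank_entry[OF assms(1)] by blast
next
  fix x r :: "nat \<Rightarrow> real" and i
  show "\<bar>NRS \<delta> d x r i\<bar> \<le> real d * sup_norm d x"
    by (rule abs_NRS_le[OF assms(2)])
qed (rule NRS_relu_network[OF assms(1)])

end
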